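(* Let $\beta>0$, $\rho\ge0$, and let $A^C_\mu$, $A^A_\mu$ be the Harrington–Shepard SU(2) caloron and anticaloron (with the same $\beta,\rho$, centered at the origin with zero temporal phase). For $\alpha\in\{C,A\}$ and $a\in\{1,2,3\}$ define $$I^a_\alpha(\tau,\vec x)=\mathrm{tr}\Big(t^a\,F^\alpha_{\mu\nu}(\tau,\vec 0)\,\{(\tau,\vec 0),(\tau,\vec x)\}_\alpha\,F^\alpha_{\mu\nu}(\tau,\vec x)\,\{(\tau,\vec x),(\tau,\vec 0)\}_\alpha\Big)$$ (summed over $\mu,\nu$). Then, wherever these expressions are defined, $I^a_A(\tau,\vec x)=I^a_C(\tau,-\vec x)$ for all $a$; i.e. the anticaloron integrand is obtained from the caloron integrand by the parity transformation $\vec x\to-\vec x$.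
   Context: Gauge group SU(2), $t_a=\frac12\sigma_a$ (Pauli matrices), summation over repeated indices, Euclidean coordinates $x_4=\tau$, $\mu,\nu\in\{1,2,3,4\}$. 't Hooft symbols: $\eta^a_{\mu\nu}=\epsilon^a_{\mu\nu}+\delta^a_\mu\delta_{\nu4}-\delta^a_\nu\delta_{\mu4}$, $\bar\eta^a_{\mu\nu}=\epsilon^a_{\mu\nu}-\delta^a_\mu\delta_{\nu4}+\delta^a_\nu\delta_{\mu4}$, where $\epsilon^a_{\mu\nu}=\epsilon_{a\mu\nu}$ for $\mu,\nu\in\{1,2,3\}$ and $0$ otherwise. Prepotential $\Pi(\tau,r)=1+\frac{\pi\rho^2}{\beta r}\frac{\sinh(2\pi r/\beta)}{\cosh(2\pi r/\beta)-\cos(2\pi\tau/\beta)}$, $r=|\vec x|$. Caloron $A^C_\mu=\bar\eta^a_{\mu\nu}t_a\partial_\nu\ln\Pi$, anticaloron $A^A_\mu=\eta^a_{\mu\nu}t_a\partial_\nu\ln\Pi$. Field strength $F_{\mu\nu}=\partial_\mu A_\nu-\partial_\nu A_\mu-i[A_\mu,A_\nu]$. The Wilson line $\{(\tau,\vec y),(\tau,\vec z)\}_\alpha$ is the path-ordered exponential $\mathcal P\exp[i\int dz_\mu A^\alpha_\mu]$ along the straight segment from $(\tau,\vec y)$ to $(\tau,\vec z)$. *)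

theory Defs
  imports "HOL-Analysis.Analysis"
begin

text \<open>Euclidean points are pairs (tau, x) with tau the Euclidean time x_4 and
  x in R^3.  Lorentz indices mu are natural numbers in {1,2,3,4}; spatial
  index k in {1,2,3} refers to the component x $ (of_nat k) (the elements
  of_nat 1, of_nat 2, of_nat 3 of the numeral type 3 are pairwise distinct).\<close>

type_synonym point = "real \<times> (real^3)"
type_synonym mat2 = "(complex^2)^2"

definition sidx :: "nat \<Rightarrow> 3" where
  "sidx k = of_nat k"

definition edir :: "nat \<Rightarrow> point" where
  "edir \<mu> = (if \<mu> = 4 then (1, 0) else (0, axis (sidx \<mu>) 1))"

definition pd :: "nat \<Rightarrow> (point \<Rightarrow> real) \<Rightarrow> point \<Rightarrow> real" where
  "pd \<mu> f p = deriv (\<lambda>h. f (p + h *\<^sub>R edir \<mu>)) 0"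

definition pdM :: "nat \<Rightarrow> (point \<Rightarrow> mat2) \<Rightarrow> point \<Rightarrow> mat2" where
  "pdM \<mu> f p = vector_derivative (\<lambda>h. f (p + h *\<^sub>R edir \<mu>)) (at 0)"

definition kd :: "nat \<Rightarrow> nat \<Rightarrow> real" where
  "kd i j = (if i = j then 1 else 0)"

definition levi :: "nat \<Rightarrow> nat \<Rightarrow> nat \<Rightarrow> real" where
  "levi a b c =
     (if (a,b,c) \<in> {(1,2,3),(2,3,1),(3,1,2)} then 1
      else if (a,b,c) \<in> {(1,3,2),(3,2,1),(2,1,3)} then -1 else 0)"

definition eps :: "nat \<Rightarrow> nat \<Rightarrow> nat \<Rightarrow> real" where
  "eps a \<mu> \<nu> = (if \<mu> \<in> {1,2,3} \<and> \<nu> \<in> {1,2,3} then levi a \<mu> \<nu> else 0)"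

definition eta :: "nat \<Rightarrow> nat \<Rightarrow> nat \<Rightarrow> real" where
  "eta a \<mu> \<nu> = eps a \<mu> \<nu> + kd a \<mu> * kd \<nu> 4 - kd a \<nu> * kd \<mu> 4"

definition etabar :: "nat \<Rightarrow> nat \<Rightarrow> nat \<Rightarrow> real" where
  "etabar a \<mu> \<nu> = eps a \<mu> \<nu> - kd a \<mu> * kd \<nu> 4 + kd a \<nu> * kd \<mu> 4"

definition pauli :: "nat \<Rightarrow> mat2" where
  "pauli a = (\<chi> i j.
     if a = 1 then (if i = j then 0 else 1)
     else if a = 2 then (if i = j then 0 else if i = 1 then - \<i> else \<i>)
     else if a = 3 then (if i \<noteq> j then 0 else if i = 1 then 1 else -1)
     else 0)"

definition tgen :: "nat \<Rightarrow> mat2" where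
  "tgen a = (1/2) *\<^sub>R pauli a"

definition cmul :: "complex \<Rightarrow> mat2 \<Rightarrow> mat2" where
  "cmul c M = (\<chi> i j. c * M $ i $ j)"

definition comm :: "mat2 \<Rightarrow> mat2 \<Rightarrow> mat2" where
  "comm X Y = X ** Y - Y ** X"

text \<open>Harrington-Shepard prepotential. At r = 0 the formula is extended by its
  limit (sinh(2 pi r/beta)/r -> 2 pi/beta), i.e. by continuity.\<close>
definition Prepot :: "real \<Rightarrow> real \<Rightarrow> real \<Rightarrow> real^3 \<Rightarrow> real" where
  "Prepot \<beta> \<rho> \<tau> x =
     (let r = norm x in
      if r = 0 then 1 + pi * \<rho>^2 / \<beta> * (2 * pi / \<beta>) / (1 - cos (2 * pi * \<tau> / \<beta>))
      else 1 + pi * \<rho>^2 / (\<beta> * r) *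
             (sinh (2 * pi * r / \<beta>) / (cosh (2 * pi * r / \<beta>) - cos (2 * pi * \<tau> / \<beta>))))"

definition lnPi :: "real \<Rightarrow> real \<Rightarrow> point \<Rightarrow> real" where
  "lnPi \<beta> \<rho> p = ln (Prepot \<beta> \<rho> (fst p) (snd p))"

text \<open>Gauge field A_mu = S^a_{mu nu} t_a d_nu ln Pi, with S = etabar (caloron)
  or S = eta (anticaloron).\<close>
definition gaugeA :: "(nat \<Rightarrow> nat \<Rightarrow> nat \<Rightarrow> real) \<Rightarrow> real \<Rightarrow> real \<Rightarrow> nat \<Rightarrow> point \<Rightarrow> mat2" where
  "gaugeA S \<beta> \<rho> \<mu> p =
     (\<Sum>a\<in>{1,2,3}. \<Sum>\<nu>\<in>{1,2,3,4}. (S a \<mu> \<nu> * pd \<nu> (lnPi \<beta> \<rho>) p) *\<^sub>R tgen a)"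

definition fieldF :: "(nat \<Rightarrow> nat \<Rightarrow> nat \<Rightarrow> real) \<Rightarrow> real \<Rightarrow> real \<Rightarrow> nat \<Rightarrow> nat \<Rightarrow> point \<Rightarrow> mat2" where
  "fieldF S \<beta> \<rho> \<mu> \<nu> p =
     pdM \<mu> (gaugeA S \<beta> \<rho> \<nu>) p - pdM \<nu> (gaugeA S \<beta> \<rho> \<mu>) p
     - cmul \<i> (comm (gaugeA S \<beta> \<rho> \<mu> p) (gaugeA S \<beta> \<rho> \<nu> p))"

text \<open>Wilson line {(tau,y),(tau,z)}: path-ordered exponential of
  i \<integral> dz_mu A_mu along the straight segment gamma(s) = (tau, y + s (z - y)),
  s in [0,1].  It is the value U(1) of the solution of
  U(0) = 1, U'(s) = U(s) (i A_k(gamma s) (z-y)_k), i.e. points earlier on the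
  path stand to the left.\<close>
definition wilson :: "(nat \<Rightarrow> nat \<Rightarrow> nat \<Rightarrow> real) \<Rightarrow> real \<Rightarrow> real \<Rightarrow> real \<Rightarrow> real^3 \<Rightarrow> real^3 \<Rightarrow> mat2" where
  "wilson S \<beta> \<rho> \<tau> y z =
     (THE W. \<exists>U. U 0 = mat 1 \<and> U 1 = W \<and>
        (\<forall>s\<in>{0..1}. (U has_vector_derivative
            (U s ** cmul \<i> (\<Sum>k\<in>{1,2,3}. ((z - y) $ sidx k) *\<^sub>R
                 gaugeA S \<beta> \<rho> k (\<tau>, y + s *\<^sub>R (z - y)))))
          (at s within {0..1})))"

definition integrandI :: "(nat \<Rightarrow> nat \<Rightarrow> nat \<Rightarrow> real) \<Rightarrow> real \<Rightarrow> real \<Rightarrow> nat \<Rightarrow> real \<Rightarrow> real^3 \<Rightarrow> complex" where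
  "integrandI S \<beta> \<rho> a \<tau> x =
     (\<Sum>\<mu>\<in>{1,2,3,4}. \<Sum>\<nu>\<in>{1,2,3,4}.
        trace (tgen a ** fieldF S \<beta> \<rho> \<mu> \<nu> (\<tau>, 0) ** wilson S \<beta> \<rho> \<tau> 0 x
               ** fieldF S \<beta> \<rho> \<mu> \<nu> (\<tau>, x) ** wilson S \<beta> \<rho> \<tau> x 0))"

end

theory Submission
  imports Defs
begin

text \<open>The prepotential depends on the spatial point only through \<open>r = |x|\<close>, so \<open>ln \<Pi>\<close> is
  even under parity \<open>x \<mapsto> -x\<close>: \<open>\<partial>\<^sub>4 ln \<Pi>\<close> is even and \<open>\<partial>\<^sub>k ln \<Pi>\<close> is odd. Together with
  \<open>etabar a \<mu> \<nu> = s\<^sub>\<mu> s\<^sub>\<nu> eta a \<mu> \<nu>\<close> (with \<open>s\<^sub>4 = 1\<close>, \<open>s\<^sub>k = -1\<close>) this gives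
  \<open>A\<^sup>C\<^sub>\<mu>(\<tau>,-x) = s\<^sub>\<mu> A\<^sup>A\<^sub>\<mu>(\<tau>,x)\<close>, hence \<open>F\<^sup>C\<^sub>\<mu>\<^sub>\<nu>(\<tau>,-x) = s\<^sub>\<mu> s\<^sub>\<nu> F\<^sup>A\<^sub>\<mu>\<^sub>\<nu>(\<tau>,x)\<close>,
  and the Wilson lines along a segment and its mirror image solve the same equation. In the
  trace the two field strengths contribute \<open>(s\<^sub>\<mu> s\<^sub>\<nu>)\<^sup>2 = 1\<close>.

  The analytic work is regularity: derivatives are taken through \<open>deriv\<close> and
  \<open>vector_derivative\<close>, which commute with \<open>h \<mapsto> -h\<close> only for differentiable functions, so
  \<open>ln \<Pi>\<close> has to be twice differentiable along coordinate lines, also at \<open>r = 0\<close>. This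
  follows by writing \<Pi> as a function of \<open>t\<close> and \<open>u = r\<^sup>2\<close> built from entire power series.\<close>

lemma sums_of_even_terms:
  fixes f :: "nat \<Rightarrow> real"
  assumes "(\<lambda>n. if even n then f (n div 2) else 0) sums x"
  shows "f sums x"
  using LIMSEQ_linear[OF assms[unfolded sums_def] pos2,
      simplified sum_split_even_odd[simplified mult.commute]]
  unfolding sums_def by auto

lemma has_vector_derivative_rescale_at_0:
  fixes f g :: "real \<Rightarrow> 'a::real_normed_vector"
  assumes "(f has_vector_derivative V) (at 0)" and "open S" and "0 \<in> S"
    and "\<And>h. h \<in> S \<Longrightarrow> g h = c *\<^sub>R f (s * h)"
  shows "(g has_vector_derivative (c * s) *\<^sub>R V) (at 0)"
proof -
  have "((\<lambda>h. s * h) has_vector_derivative s) (at 0)"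
    by (auto intro!: derivative_eq_intros simp: has_real_derivative_iff_has_vector_derivative[symmetric])
  from vector_diff_chain_at[OF this] assms(1)
  have "((\<lambda>h. f (s * h)) has_vector_derivative s *\<^sub>R V) (at 0)"
    by (simp add: o_def)
  then have "((\<lambda>h. c *\<^sub>R f (s * h)) has_vector_derivative c *\<^sub>R (s *\<^sub>R V)) (at 0)"
    by (rule bounded_linear.has_vector_derivative[OF bounded_linear_scaleR_right])
  then show ?thesis
    using assms(2,3,4) by (auto intro: has_vector_derivative_transform_within_open)
qed

lemma inner_line_expand:
  fixes y w :: "'a::real_inner"
  shows "(y + h *\<^sub>R w) \<bullet> (y + h *\<^sub>R w) = y \<bullet> y + 2 * h * (y \<bullet> w) + h\<^sup>2 * (w \<bullet> w)"
  by (simp add: inner_add_left inner_add_right inner_commute power2_eq_square algebra_simps)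

lemma point_line_eq: "p + h *\<^sub>R q = (fst p + h * fst q, snd p + h *\<^sub>R snd q)"
  for p q :: point
  by (simp add: prod_eq_iff)

lemma comm_scaleR: "comm (a *\<^sub>R X) (b *\<^sub>R Y) = (a * b) *\<^sub>R comm X Y"
  by (simp add: comm_def matrix_scalar_ac scalar_matrix_assoc[symmetric] scaleR_diff_right mult.commute)

lemma cmul_scaleR: "cmul c (s *\<^sub>R M) = s *\<^sub>R cmul c M"
  by (simp add: cmul_def vec_eq_iff)

lemma trace_scaleR: "trace (s *\<^sub>R M) = s *\<^sub>R trace M"
  by (simp add: trace_def scaleR_sum_right)

definition pseries :: "(nat \<Rightarrow> real) \<Rightarrow> real \<Rightarrow> real" where
  "pseries c u = (\<Sum>n. c n * u ^ n)"

definition entire_coeffs :: "(nat \<Rightarrow> real) \<Rightarrow> bool" where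
  "entire_coeffs c \<longleftrightarrow> (\<forall>u. summable (\<lambda>n. c n * u ^ n))"

lemma entire_coeffs_diffs: "entire_coeffs c \<Longrightarrow> entire_coeffs (diffs c)"
  unfolding entire_coeffs_def by (blast intro: termdiff_converges_all)

lemma entire_coeffs_if_exp_bound:
  assumes "\<And>n. \<bar>c n\<bar> \<le> C * B ^ n / fact n"
  shows "entire_coeffs c"
  unfolding entire_coeffs_def
proof
  fix u :: real
  show "summable (\<lambda>n. c n * u ^ n)"
  proof (rule summable_comparison_test')
    show "summable (\<lambda>n. C * (inverse (fact n) * (B * \<bar>u\<bar>) ^ n))"
      by (intro summable_mult summable_exp)
    fix n
    have "norm (c n * u ^ n) \<le> C * B ^ n / fact n * \<bar>u\<bar> ^ n"
      using mult_right_mono[OF assms, of "\<bar>u\<bar> ^ n"] by (simp add: abs_mult power_abs)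
    then show "norm (c n * u ^ n) \<le> C * (inverse (fact n) * (B * \<bar>u\<bar>) ^ n)"
      by (simp add: power_mult_distrib field_simps)
  qed
qed

lemma pseries_has_real_derivative [derivative_intros]:
  assumes "entire_coeffs c" and "(f has_real_derivative f') (at x within s)"
  shows "((\<lambda>x. pseries c (f x)) has_real_derivative pseries (diffs c) (f x) * f') (at x within s)"
  using DERIV_chain2[OF termdiffs_strong_converges_everywhere assms(2)] assms(1)
  unfolding pseries_def entire_coeffs_def by blast

lemma pseries_zero [simp]: "pseries c 0 = c 0"
  by (simp add: pseries_def)

text \<open>Taylor coefficients in \<open>u\<close> of \<open>sinh (k \<surd>u) / \<surd>u\<close> and \<open>cosh (k \<surd>u)\<close>.\<close>

definition sinhc_coeffs :: "real \<Rightarrow> nat \<Rightarrow> real" where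
  "sinhc_coeffs k m = k ^ (2 * m + 1) / fact (2 * m + 1)"

definition cosh_coeffs :: "real \<Rightarrow> nat \<Rightarrow> real" where
  "cosh_coeffs k m = k ^ (2 * m) / fact (2 * m)"

lemma entire_sinhc_coeffs [simp]: "entire_coeffs (sinhc_coeffs k)"
proof (rule entire_coeffs_if_exp_bound)
  fix n
  have "fact n \<le> (fact (2 * n + 1) :: real)" by (intro fact_mono) auto
  then have "\<bar>k\<bar> * (k\<^sup>2) ^ n / fact (2 * n + 1) \<le> \<bar>k\<bar> * (k\<^sup>2) ^ n / fact n"
    by (intro divide_left_mono) auto
  moreover have "\<bar>sinhc_coeffs k n\<bar> = \<bar>k\<bar> * (k\<^sup>2) ^ n / fact (2 * n + 1)"
    by (simp add: sinhc_coeffs_def abs_mult power_abs power_even_abs power_mult[symmetric])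
  ultimately show "\<bar>sinhc_coeffs k n\<bar> \<le> \<bar>k\<bar> * (k\<^sup>2) ^ n / fact n"
    by simp
qed

lemma entire_cosh_coeffs [simp]: "entire_coeffs (cosh_coeffs k)"
proof (rule entire_coeffs_if_exp_bound)
  fix n
  have "fact n \<le> (fact (2 * n) :: real)" by (intro fact_mono) auto
  then have "1 * (k\<^sup>2) ^ n / fact (2 * n) \<le> 1 * (k\<^sup>2) ^ n / fact n"
    by (intro divide_left_mono) auto
  then show "\<bar>cosh_coeffs k n\<bar> \<le> 1 * (k\<^sup>2) ^ n / fact n"
    by (simp add: cosh_coeffs_def power_abs power_even_abs power_mult[symmetric])
qed

lemma pseries_cosh_coeffs: "pseries (cosh_coeffs k) (r\<^sup>2) = cosh (k * r)"
proof -
  have "(\<lambda>n. if even n then (k * r) ^ n /\<^sub>R fact n else 0) sums cosh (k * r)"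
    by (rule cosh_converges)
  then have "(\<lambda>n. if even n then (\<lambda>m. cosh_coeffs k m * (r\<^sup>2) ^ m) (n div 2) else 0)
      sums cosh (k * r)"
    by (rule sums_cong[THEN iffD1, rotated])
      (auto simp: cosh_coeffs_def power_mult[symmetric] power_mult_distrib divide_inverse elim!: evenE)
  then show ?thesis
    unfolding pseries_def by (rule sums_of_even_terms[THEN sums_unique, symmetric])
qed

lemma pseries_sinhc_coeffs:
  assumes "r \<noteq> 0"
  shows "pseries (sinhc_coeffs k) (r\<^sup>2) = sinh (k * r) / r"
proof -
  have "(\<lambda>n. if even n then 0 else (k * r) ^ n /\<^sub>R fact n) sums sinh (k * r)"
    by (rule sinh_converges)
  then have "(\<lambda>n. if even (Suc n) then 0 else (k * r) ^ Suc n /\<^sub>R fact (Suc n)) sums sinh (k * r)"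
    by (subst sums_Suc_iff) simp
  then have "(\<lambda>n. if even n then (\<lambda>m. r * (sinhc_coeffs k m * (r\<^sup>2) ^ m)) (n div 2) else 0)
      sums sinh (k * r)"
    by (rule sums_cong[THEN iffD1, rotated])
      (auto simp: sinhc_coeffs_def power_mult[symmetric] power_mult_distrib divide_inverse elim!: evenE)
  then have "(\<lambda>m. r * (sinhc_coeffs k m * (r\<^sup>2) ^ m)) sums sinh (k * r)"
    by (rule sums_of_even_terms)
  then have "(\<lambda>m. sinhc_coeffs k m * (r\<^sup>2) ^ m) sums (sinh (k * r) / r)"
    using assms by (rule sums_mult_D)
  then show ?thesis
    unfolding pseries_def by (rule sums_unique[symmetric])
qed

lemma pseries_cosh_coeffs_ge_1:
  assumes "u \<ge> 0"
  shows "pseries (cosh_coeffs k) u \<ge> 1"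
  using pseries_cosh_coeffs[of k "sqrt u", unfolded real_sqrt_pow2[OF assms]]
  by (simp add: cosh_real_ge_1)

lemma pseries_sinhc_coeffs_pos:
  assumes "u \<ge> 0" and "k > 0"
  shows "pseries (sinhc_coeffs k) u > 0"
proof (cases "u = 0")
  case True
  then show ?thesis using assms by (simp add: sinhc_coeffs_def)
next
  case False
  then have "sqrt u > 0" using assms by simp
  then show ?thesis
    using pseries_sinhc_coeffs[of "sqrt u" k, unfolded real_sqrt_pow2[OF assms(1)]] assms(2)
    by simp
qed

definition prepot :: "real \<Rightarrow> real \<Rightarrow> real \<Rightarrow> real \<Rightarrow> real" where
  "prepot \<kappa> k t u =
     1 + \<kappa> * (pseries (sinhc_coeffs k) u / (pseries (cosh_coeffs k) u - cos (k * t)))"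

definition prepot_dt :: "real \<Rightarrow> real \<Rightarrow> real \<Rightarrow> real \<Rightarrow> real" where
  "prepot_dt \<kappa> k t u =
     - \<kappa> * pseries (sinhc_coeffs k) u * k * sin (k * t) / (pseries (cosh_coeffs k) u - cos (k * t))\<^sup>2"

definition prepot_du :: "real \<Rightarrow> real \<Rightarrow> real \<Rightarrow> real \<Rightarrow> real" where
  "prepot_du \<kappa> k t u =
     \<kappa> * (pseries (diffs (sinhc_coeffs k)) u * (pseries (cosh_coeffs k) u - cos (k * t))
          - pseries (sinhc_coeffs k) u * pseries (diffs (cosh_coeffs k)) u)
       / (pseries (cosh_coeffs k) u - cos (k * t))\<^sup>2"

lemma prepot_has_real_derivative:
  assumes T: "(T has_real_derivative T') (at h)" and U: "(U has_real_derivative U') (at h)"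
    and den: "pseries (cosh_coeffs k) (U h) - cos (k * T h) \<noteq> 0"
  shows "((\<lambda>h. prepot \<kappa> k (T h) (U h)) has_real_derivative
           prepot_dt \<kappa> k (T h) (U h) * T' + prepot_du \<kappa> k (T h) (U h) * U') (at h)"
proof -
  define N N' M M' where "N = pseries (sinhc_coeffs k) (U h)"
    and "N' = pseries (diffs (sinhc_coeffs k)) (U h)"
    and "M = pseries (cosh_coeffs k) (U h)" and "M' = pseries (diffs (cosh_coeffs k)) (U h)"
  have num: "((\<lambda>h. pseries (sinhc_coeffs k) (U h)) has_real_derivative N' * U') (at h)"
    unfolding N'_def using U by (auto intro!: derivative_eq_intros)
  have denom: "((\<lambda>h. pseries (cosh_coeffs k) (U h) - cos (k * T h)) has_real_derivative
      M' * U' + sin (k * T h) * (k * T')) (at h)"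
    unfolding M'_def using T U by (auto intro!: derivative_eq_intros)
  have "((\<lambda>h. prepot \<kappa> k (T h) (U h)) has_real_derivative
      0 + \<kappa> * ((N' * U' * (M - cos (k * T h)) - N * (M' * U' + sin (k * T h) * (k * T')))
        / ((M - cos (k * T h)) * (M - cos (k * T h))))) (at h)"
    unfolding prepot_def N_def M_def
    by (intro DERIV_add DERIV_const DERIV_cmult DERIV_divide num denom den)
  then show ?thesis
    unfolding prepot_dt_def prepot_du_def N_def[symmetric] N'_def[symmetric] M_def[symmetric]
      M'_def[symmetric]
    by (simp add: diff_divide_distrib add_divide_distrib power2_eq_square algebra_simps)
qed

lemma prepot_den_pos:
  assumes "cos (k * t) \<noteq> 1" and "u \<ge> 0"
  shows "pseries (cosh_coeffs k) u - cos (k * t) > 0"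
  using pseries_cosh_coeffs_ge_1[OF assms(2), of k] cos_le_one[of "k * t"] assms(1) by linarith

lemma prepot_pos:
  assumes "\<kappa> \<ge> 0" and "k > 0" and "cos (k * t) \<noteq> 1" and "u \<ge> 0"
  shows "prepot \<kappa> k t u > 0"
proof -
  have "pseries (sinhc_coeffs k) u / (pseries (cosh_coeffs k) u - cos (k * t)) \<ge> 0"
    using pseries_sinhc_coeffs_pos[OF assms(4,2)] prepot_den_pos[OF assms(3,4)] by simp
  then show ?thesis
    unfolding prepot_def using assms(1) by (intro add_pos_nonneg mult_nonneg_nonneg) auto
qed

lemma Prepot_eq_prepot: "Prepot \<beta> \<rho> t y = prepot (pi * \<rho>\<^sup>2 / \<beta>) (2 * pi / \<beta>) t (y \<bullet> y)"
proof (cases "y = 0")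
  case True
  then show ?thesis by (simp add: Prepot_def prepot_def sinhc_coeffs_def cosh_coeffs_def)
next
  case False
  have u: "y \<bullet> y = (norm y)\<^sup>2" by (simp add: power2_norm_eq_inner)
  show ?thesis
    using False unfolding Prepot_def prepot_def Let_def u
    by (simp add: pseries_sinhc_coeffs pseries_cosh_coeffs divide_inverse mult_ac)
qed

definition dln_prepot :: "real \<Rightarrow> real \<Rightarrow> nat \<Rightarrow> point \<Rightarrow> real" where
  "dln_prepot \<kappa> k \<nu> p =
     (prepot_dt \<kappa> k (fst p) (snd p \<bullet> snd p) * fst (edir \<nu>)
      + prepot_du \<kappa> k (fst p) (snd p \<bullet> snd p) * (2 * (snd p \<bullet> snd (edir \<nu>))))
     / prepot \<kappa> k (fst p) (snd p \<bullet> snd p)"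

lemma pd_lnPi:
  assumes "\<beta> > 0" and "cos (2 * pi * fst p / \<beta>) \<noteq> 1"
  shows "pd \<nu> (lnPi \<beta> \<rho>) p = dln_prepot (pi * \<rho>\<^sup>2 / \<beta>) (2 * pi / \<beta>) \<nu> p"
proof -
  define \<kappa> k where "\<kappa> = pi * \<rho>\<^sup>2 / \<beta>" and "k = 2 * pi / \<beta>"
  define T U where "T h = fst p + h * fst (edir \<nu>)"
    and "U h = snd p \<bullet> snd p + 2 * h * (snd p \<bullet> snd (edir \<nu>)) + h\<^sup>2 * (snd (edir \<nu>) \<bullet> snd (edir \<nu>))"
    for h
  have line: "lnPi \<beta> \<rho> (p + h *\<^sub>R edir \<nu>) = ln (prepot \<kappa> k (T h) (U h))" for h
    unfolding lnPi_def Prepot_eq_prepot point_line_eq T_def U_def \<kappa>_def k_def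
    by (simp add: inner_line_expand)
  have good: "cos (k * T 0) \<noteq> 1"
    using assms(2) by (simp add: T_def k_def)
  have pos: "prepot \<kappa> k (T 0) (U 0) > 0"
    using assms(1) good by (intro prepot_pos) (auto simp: \<kappa>_def k_def U_def)
  have "((\<lambda>h. prepot \<kappa> k (T h) (U h)) has_real_derivative
      prepot_dt \<kappa> k (T 0) (U 0) * fst (edir \<nu>)
      + prepot_du \<kappa> k (T 0) (U 0) * (2 * (snd p \<bullet> snd (edir \<nu>)))) (at 0)"
    using prepot_den_pos[OF good, of "U 0"]
    by (intro prepot_has_real_derivative) (auto simp: T_def U_def intro!: derivative_eq_intros)
  from DERIV_chain2[OF DERIV_ln[OF pos] this]
  have "((\<lambda>h. lnPi \<beta> \<rho> (p + h *\<^sub>R edir \<nu>)) has_real_derivative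
      dln_prepot \<kappa> k \<nu> p) (at 0)"
    unfolding line dln_prepot_def by (simp add: T_def U_def divide_inverse mult.commute)
  then show ?thesis
    unfolding pd_def \<kappa>_def k_def by (rule DERIV_imp_deriv)
qed

lemma prepot_partials_differentiable:
  fixes T U :: "real \<Rightarrow> real"
  assumes "(T has_real_derivative T') (at h)" and "(U has_real_derivative U') (at h)"
    and "pseries (cosh_coeffs k) (U h) - cos (k * T h) \<noteq> 0"
  shows "(\<lambda>h. prepot_dt \<kappa> k (T h) (U h)) differentiable (at h)"
    and "(\<lambda>h. prepot_du \<kappa> k (T h) (U h)) differentiable (at h)"
  unfolding real_differentiable_def prepot_dt_def prepot_du_def using assms
  by (auto intro!: exI derivative_eq_intros simp: entire_coeffs_diffs)

lemma dln_prepot_differentiable_along: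
  assumes "\<kappa> \<ge> 0" and "k > 0" and "cos (k * fst p) \<noteq> 1"
  shows "(\<lambda>h. dln_prepot \<kappa> k \<nu> (p + h *\<^sub>R q)) differentiable (at 0)"
proof -
  define T U W where "T h = fst p + h * fst q"
    and "U h = snd p \<bullet> snd p + 2 * h * (snd p \<bullet> snd q) + h\<^sup>2 * (snd q \<bullet> snd q)"
    and "W h = snd p \<bullet> snd (edir \<nu>) + h * (snd q \<bullet> snd (edir \<nu>))" for h
  have line: "dln_prepot \<kappa> k \<nu> (p + h *\<^sub>R q) =
      (prepot_dt \<kappa> k (T h) (U h) * fst (edir \<nu>) + prepot_du \<kappa> k (T h) (U h) * (2 * W h))
      / prepot \<kappa> k (T h) (U h)" for h
    unfolding dln_prepot_def point_line_eq prod.sel inner_line_expand T_def U_def W_def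
    by (simp add: inner_add_left)
  have T: "(T has_real_derivative fst q) (at 0)"
    and U: "(U has_real_derivative 2 * (snd p \<bullet> snd q)) (at 0)"
    and W: "W differentiable (at 0)"
    unfolding T_def U_def W_def real_differentiable_def by (auto intro!: derivative_eq_intros exI)
  have good: "cos (k * T 0) \<noteq> 1" and "U 0 \<ge> 0"
    using assms(3) by (auto simp: T_def U_def)
  then have den: "pseries (cosh_coeffs k) (U 0) - cos (k * T 0) \<noteq> 0"
    and pos: "prepot \<kappa> k (T 0) (U 0) \<noteq> 0"
    using prepot_den_pos prepot_pos assms(1,2) by (metis less_irrefl)+
  have "(\<lambda>h. prepot \<kappa> k (T h) (U h)) differentiable (at 0)"
    using prepot_has_real_derivative[OF T U den] by (auto simp: real_differentiable_def)
  moreover note prepot_partials_differentiable[OF T U den]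
  ultimately show ?thesis
    unfolding line using W pos
    by (intro differentiable_divide differentiable_add differentiable_mult differentiable_const) auto
qed

definition parity :: "point \<Rightarrow> point" where
  "parity p = (fst p, - snd p)"

definition parity_sign :: "nat \<Rightarrow> real" where
  "parity_sign \<mu> = (if \<mu> = 4 then 1 else -1)"

lemma parity_sign_mult_self [simp]: "parity_sign \<mu> * parity_sign \<mu> = 1"
  by (simp add: parity_sign_def)

lemma etabar_eq_parity_sign_eta:
  assumes "\<mu> \<in> {1,2,3,4}" and "\<nu> \<in> {1,2,3,4}"
  shows "etabar a \<mu> \<nu> = parity_sign \<mu> * parity_sign \<nu> * eta a \<mu> \<nu>"
  using assms by (auto simp: etabar_def eta_def eps_def kd_def parity_sign_def)

lemma parity_add_edir:
  "parity p + h *\<^sub>R edir \<mu> = parity (p + (parity_sign \<mu> * h) *\<^sub>R edir \<mu>)"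
  by (simp add: parity_def parity_sign_def edir_def prod_eq_iff)

lemma dln_prepot_parity:
  "dln_prepot \<kappa> k \<nu> (parity p) = parity_sign \<nu> * dln_prepot \<kappa> k \<nu> p"
  by (simp add: dln_prepot_def parity_def parity_sign_def edir_def)

lemma gaugeA_eq_dln_prepot:
  assumes "\<beta> > 0" and "cos (2 * pi * fst p / \<beta>) \<noteq> 1"
  shows "gaugeA S \<beta> \<rho> \<mu> p = (\<Sum>a\<in>{1,2,3}. \<Sum>\<nu>\<in>{1,2,3,4}.
           (S a \<mu> \<nu> * dln_prepot (pi * \<rho>\<^sup>2 / \<beta>) (2 * pi / \<beta>) \<nu> p) *\<^sub>R tgen a)"
  unfolding gaugeA_def pd_lnPi[OF assms] ..

lemma gaugeA_parity:
  assumes "\<beta> > 0" and "cos (2 * pi * fst p / \<beta>) \<noteq> 1" and "\<mu> \<in> {1,2,3,4}"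
  shows "gaugeA etabar \<beta> \<rho> \<mu> (parity p) = parity_sign \<mu> *\<^sub>R gaugeA eta \<beta> \<rho> \<mu> p"
proof -
  have good: "cos (2 * pi * fst (parity p) / \<beta>) \<noteq> 1"
    using assms(2) by (simp add: parity_def)
  show ?thesis
    unfolding gaugeA_eq_dln_prepot[OF assms(1,2)] gaugeA_eq_dln_prepot[OF assms(1) good]
      dln_prepot_parity scaleR_sum_right
    using assms(3) by (intro sum.cong refl) (simp add: etabar_eq_parity_sign_eta)
qed

lemma gaugeA_differentiable_along:
  assumes "\<beta> > 0" and "cos (2 * pi * fst p / \<beta>) \<noteq> 1"
  shows "(\<lambda>h. gaugeA S \<beta> \<rho> \<nu> (p + h *\<^sub>R edir \<mu>)) differentiable (at 0)"
proof -
  define X where "X = {h. cos (2 * pi * fst (p + h *\<^sub>R edir \<mu>) / \<beta>) \<noteq> 1}"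
  define E where "E h = (\<Sum>a\<in>{1,2,3}. \<Sum>\<nu>'\<in>{1,2,3,4}.
      (S a \<nu> \<nu>' * dln_prepot (pi * \<rho>\<^sup>2 / \<beta>) (2 * pi / \<beta>) \<nu>' (p + h *\<^sub>R edir \<mu>)) *\<^sub>R tgen a)"
    for h
  have X: "open X" "0 \<in> X"
    unfolding X_def using assms by (auto intro!: open_Collect_neq continuous_intros)
  have "cos (2 * pi / \<beta> * fst p) \<noteq> 1"
    using assms(2) by (simp add: mult.commute)
  then have "E differentiable (at 0)"
    unfolding E_def using assms(1)
    by (intro differentiable_sum ballI finite.intros differentiable_scaleR differentiable_mult
        differentiable_const dln_prepot_differentiable_along) auto
  then obtain V where "(E has_vector_derivative V) (at 0)"
    using vector_derivative_works by blast
  then have "((\<lambda>h. gaugeA S \<beta> \<rho> \<nu> (p + h *\<^sub>R edir \<mu>)) has_vector_derivative V) (at 0)"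
    by (rule has_vector_derivative_transform_within_open[OF _ X])
      (simp add: X_def E_def gaugeA_eq_dln_prepot[OF assms(1)])
  then show ?thesis
    by (rule differentiableI_vector)
qed

lemma pdM_gaugeA_parity:
  assumes "\<beta> > 0" and "cos (2 * pi * fst p / \<beta>) \<noteq> 1" and "\<nu> \<in> {1,2,3,4}"
  shows "pdM \<mu> (gaugeA etabar \<beta> \<rho> \<nu>) (parity p)
           = (parity_sign \<mu> * parity_sign \<nu>) *\<^sub>R pdM \<mu> (gaugeA eta \<beta> \<rho> \<nu>) p"
proof -
  define X where "X = {h. cos (2 * pi * fst (p + (parity_sign \<mu> * h) *\<^sub>R edir \<mu>) / \<beta>) \<noteq> 1}"
  have X: "open X" "0 \<in> X"
    unfolding X_def using assms by (auto intro!: open_Collect_neq continuous_intros)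
  have "((\<lambda>h. gaugeA eta \<beta> \<rho> \<nu> (p + h *\<^sub>R edir \<mu>)) has_vector_derivative
      pdM \<mu> (gaugeA eta \<beta> \<rho> \<nu>) p) (at 0)"
    unfolding pdM_def using gaugeA_differentiable_along[OF assms(1,2)]
    by (rule vector_derivative_works[THEN iffD1])
  then have "((\<lambda>h. gaugeA etabar \<beta> \<rho> \<nu> (parity p + h *\<^sub>R edir \<mu>)) has_vector_derivative
      (parity_sign \<nu> * parity_sign \<mu>) *\<^sub>R pdM \<mu> (gaugeA eta \<beta> \<rho> \<nu>) p) (at 0)"
    by (rule has_vector_derivative_rescale_at_0[OF _ X])
      (simp add: X_def parity_add_edir gaugeA_parity[OF assms(1) _ assms(3)])
  then show ?thesis
    unfolding pdM_def by (simp add: vector_derivative_at mult.commute)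
qed

lemma fieldF_parity:
  assumes "\<beta> > 0" and "cos (2 * pi * fst p / \<beta>) \<noteq> 1"
    and "\<mu> \<in> {1,2,3,4}" and "\<nu> \<in> {1,2,3,4}"
  shows "fieldF etabar \<beta> \<rho> \<mu> \<nu> (parity p)
           = (parity_sign \<mu> * parity_sign \<nu>) *\<^sub>R fieldF eta \<beta> \<rho> \<mu> \<nu> p"
  unfolding fieldF_def pdM_gaugeA_parity[OF assms(1,2,3)] pdM_gaugeA_parity[OF assms(1,2,4)]
    gaugeA_parity[OF assms(1,2,3)] gaugeA_parity[OF assms(1,2,4)] comm_scaleR cmul_scaleR
  by (simp add: scaleR_diff_right mult.commute)

lemma wilson_parity:
  assumes "\<beta> > 0" and "cos (2 * pi * \<tau> / \<beta>) \<noteq> 1"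
  shows "wilson etabar \<beta> \<rho> \<tau> (- y) (- z) = wilson eta \<beta> \<rho> \<tau> y z"
proof -
  have "((- z - - y) $ sidx k) *\<^sub>R gaugeA etabar \<beta> \<rho> k (\<tau>, - y + s *\<^sub>R (- z - - y))
      = ((z - y) $ sidx k) *\<^sub>R gaugeA eta \<beta> \<rho> k (\<tau>, y + s *\<^sub>R (z - y))"
    if "k \<in> {1,2,3}" for k s
  proof -
    have "(\<tau>, - y + s *\<^sub>R (- z - - y)) = parity (\<tau>, y + s *\<^sub>R (z - y))"
      by (simp add: parity_def algebra_simps)
    then show ?thesis
      using gaugeA_parity[OF assms(1), of "(\<tau>, y + s *\<^sub>R (z - y))" k \<rho>] assms(2) that
      by (auto simp: parity_sign_def scaleR_diff_left)
  qed
  then show ?thesis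
    unfolding wilson_def by (simp cong: sum.cong)
qed

lemma integrandI_rho_0: "integrandI S \<beta> 0 a \<tau> x = 0"
proof -
  have "lnPi \<beta> 0 = (\<lambda>p. 0)"
    by (simp add: lnPi_def Prepot_def Let_def fun_eq_iff)
  then have "pd \<nu> (lnPi \<beta> 0) p = 0" for \<nu> p
    unfolding pd_def by (intro DERIV_imp_deriv) simp
  then have "gaugeA S \<beta> 0 \<mu> = (\<lambda>p. 0)" for \<mu>
    by (simp add: gaugeA_def fun_eq_iff)
  then have "fieldF S \<beta> 0 \<mu> \<nu> p = 0" for \<mu> \<nu> p
    by (simp add: fieldF_def pdM_def comm_def cmul_def vec_eq_iff vector_derivative_const_at)
  then show ?thesis
    by (simp add: integrandI_def trace_def)
qed

theorem proposition4:
  fixes \<beta> \<rho> \<tau> :: real and x :: "real^3" and a :: nat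
  assumes "\<beta> > 0" and "\<rho> \<ge> 0"
    and "\<rho> > 0 \<longrightarrow> cos (2 * pi * \<tau> / \<beta>) \<noteq> 1"
    and "a \<in> {1,2,3}"
  shows "integrandI eta \<beta> \<rho> a \<tau> x = integrandI etabar \<beta> \<rho> a \<tau> (- x)"
proof (cases "\<rho> = 0")
  case True
  then show ?thesis by (simp add: integrandI_rho_0)
next
  case False
  then have good: "cos (2 * pi * \<tau> / \<beta>) \<noteq> 1" using assms(2,3) by simp
  have F: "fieldF etabar \<beta> \<rho> \<mu> \<nu> (\<tau>, - y)
      = (parity_sign \<mu> * parity_sign \<nu>) *\<^sub>R fieldF eta \<beta> \<rho> \<mu> \<nu> (\<tau>, y)"
    if "\<mu> \<in> {1,2,3,4}" and "\<nu> \<in> {1,2,3,4}" for \<mu> \<nu> y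
    using fieldF_parity[OF assms(1) _ that, of "(\<tau>, y)" \<rho>] good by (simp add: parity_def)
  have W: "wilson etabar \<beta> \<rho> \<tau> (- y) (- z) = wilson eta \<beta> \<rho> \<tau> y z" for y z
    by (rule wilson_parity[OF assms(1) good])
  show ?thesis
    unfolding integrandI_def
    using F F[where y = 0, simplified] W[where y = 0, simplified] W[where z = 0, simplified]
    by (intro sum.cong refl)
      (simp add: matrix_scalar_ac scalar_matrix_assoc[symmetric] trace_scaleR parity_sign_def)
qed

end
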